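(* Let $\mathcal{M}=(M_i\colon i\in K)$ be a family of matroids on a common ground set $E$. Let $(I_i\colon i\in K)$ be a family of pairwise disjoint sets such that $I_i$ is independent in $M_i$ for all $i\in K$, and let $e\in E\setminus\bigcup_{i\in K}I_i$. Then exactly one of the following two statements holds. (1) There are a family of sets $(J_i\colon i\in K)$ and $k\in K$ such that: (a) $J_i$ is independent in $M_i$ for all $i$; (b) $J_i\cap J_j=\emptyset$ for $i\neq j$; (c) $\bigcup_{i\in K}J_i=\bigcup_{i\in K}I_i\cup\{e\}$; (d) $\sum_{i\in K}|I_i\triangle J_i|<\aleph_0$; (e) $\mathrm{span}_{M_i}(J_i)=\mathrm{span}_{M_i}(I_i)$ for all $i\neq k$, and $\mathrm{span}_{M_k}(J_k\setminus\{f\})=\mathrm{span}_{M_k}(I_k)$ for some $f\in J_k$. (2) There exists $X\subseteq\bigcup_{i\in K}I_i$ such that for every $i\in K$ the set $I_i\cap X$ spans $X\cup\{e\}$ in $M_i$.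
   Context: Matroids here are possibly infinite: a matroid is a pair $(E,\mathcal{I})$ with $\mathcal{I}\subseteq\mathcal{P}(E)$ such that (1) $\emptyset\in\mathcal{I}$; (2) $\mathcal{I}$ is closed under subsets; (3) for all $I,B\in\mathcal{I}$ with $B$ maximal in $\mathcal{I}$ and $I$ not maximal, there is $x\in B\setminus I$ with $I\cup\{x\}\in\mathcal{I}$; (4) for every $X\subseteq E$, every $I\in\mathcal{I}$ with $I\subseteq X$ extends to a maximal element of $\mathcal{I}\cap\mathcal{P}(X)$. Circuits are minimal dependent sets. A set $X$ spans $e$ in $M$ if $e\in X$ or there is a circuit $C\ni e$ with $C\setminus\{e\}\subseteq X$; $\mathrm{span}_M(X)$ is the set of elements spanned by $X$, and $X$ spans a set $Y$ if $Y\subseteq\mathrm{span}_M(X)$. *)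

theory Defs
  imports Main
begin

definition maximal_in :: "'a set set \<Rightarrow> 'a set \<Rightarrow> bool" where
  "maximal_in F B \<longleftrightarrow> B \<in> F \<and> (\<forall>B'\<in>F. B \<subseteq> B' \<longrightarrow> B' = B)"

definition matroid :: "'a set \<Rightarrow> 'a set set \<Rightarrow> bool" where
  "matroid E Ind \<longleftrightarrow>
     Ind \<subseteq> Pow E \<and>
     {} \<in> Ind \<and>
     (\<forall>A\<in>Ind. \<forall>B. B \<subseteq> A \<longrightarrow> B \<in> Ind) \<and>
     (\<forall>I\<in>Ind. \<forall>B\<in>Ind. maximal_in Ind B \<and> \<not> maximal_in Ind I \<longrightarrow>
         (\<exists>x\<in>B - I. insert x I \<in> Ind)) \<and>
     (\<forall>X. X \<subseteq> E \<longrightarrow> (\<forall>I\<in>Ind. I \<subseteq> X \<longrightarrow>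
         (\<exists>B. maximal_in (Ind \<inter> Pow X) B \<and> I \<subseteq> B)))"

definition circuit :: "'a set \<Rightarrow> 'a set set \<Rightarrow> 'a set \<Rightarrow> bool" where
  "circuit E Ind C \<longleftrightarrow> C \<subseteq> E \<and> C \<notin> Ind \<and> (\<forall>D. D \<subset> C \<longrightarrow> D \<in> Ind)"

definition spans_elem :: "'a set \<Rightarrow> 'a set set \<Rightarrow> 'a set \<Rightarrow> 'a \<Rightarrow> bool" where
  "spans_elem E Ind X e \<longleftrightarrow> e \<in> X \<or> (\<exists>C. circuit E Ind C \<and> e \<in> C \<and> C - {e} \<subseteq> X)"

definition span :: "'a set \<Rightarrow> 'a set set \<Rightarrow> 'a set \<Rightarrow> 'a set" where
  "span E Ind X = {e \<in> E. spans_elem E Ind X e}"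

end

theory Submission
  imports Defs
begin

text \<open>If a set \<open>X\<close> as in (2) exists, (1) is impossible by counting: in each \<open>M i\<close> the
  independent set \<open>J i \<inter> (X \<union> {e})\<close> lies in the span of \<open>I i \<inter> X\<close>, so it gains at most as
  many elements over \<open>I i \<inter> X\<close> as it loses, whereas every element of \<open>X\<close> that leaves its
  \<open>I i\<close> enters some \<open>J j\<close>, and \<open>e\<close> enters as well.

  Otherwise consider the exchange graph, with an edge from \<open>x\<close> to \<open>y\<close> when \<open>y\<close> lies on the
  fundamental circuit of \<open>x\<close> in some \<open>I i\<close>. The elements reachable from \<open>e\<close> cannot form
  such an \<open>X\<close>, so some reachable element can be added to some \<open>I k\<close>. Exchanging along a
  shortest path from \<open>e\<close> to it preserves all spans: since the path has no shortcuts, the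
  exchanges it performs inside each \<open>M i\<close> can be carried out one after another, from the last
  to the first.\<close>

lemma matroid_indep_subset_ground: "matroid E Ind \<Longrightarrow> I \<in> Ind \<Longrightarrow> I \<subseteq> E"
  unfolding matroid_def by auto

lemma matroid_indep_subset: "matroid E Ind \<Longrightarrow> A \<in> Ind \<Longrightarrow> B \<subseteq> A \<Longrightarrow> B \<in> Ind"
  unfolding matroid_def by auto

lemma matroid_augment:
  assumes "matroid E Ind" "I \<in> Ind" "maximal_in Ind B" "\<not> maximal_in Ind I"
  shows "\<exists>x\<in>B - I. insert x I \<in> Ind"
proof -
  have "\<forall>I\<in>Ind. \<forall>B\<in>Ind. maximal_in Ind B \<and> \<not> maximal_in Ind I \<longrightarrow> (\<exists>x\<in>B - I. insert x I \<in> Ind)"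
    using assms(1) unfolding matroid_def by (elim conjE) assumption
  moreover have "B \<in> Ind" using assms(3) unfolding maximal_in_def by blast
  ultimately show ?thesis using assms(2-4) by blast
qed

lemma matroid_extend_maximal:
  assumes "matroid E Ind" "X \<subseteq> E" "I \<in> Ind" "I \<subseteq> X"
  shows "\<exists>B. maximal_in (Ind \<inter> Pow X) B \<and> I \<subseteq> B"
proof -
  have "\<forall>X. X \<subseteq> E \<longrightarrow> (\<forall>I\<in>Ind. I \<subseteq> X \<longrightarrow> (\<exists>B. maximal_in (Ind \<inter> Pow X) B \<and> I \<subseteq> B))"
    using assms(1) unfolding matroid_def by (elim conjE) assumption
  then show ?thesis using assms(2-4) by blast
qed

lemma indep_extends_to_base:
  assumes M: "matroid E Ind" and I: "I \<in> Ind"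
  obtains B where "maximal_in Ind B" "I \<subseteq> B"
proof -
  obtain B where "maximal_in (Ind \<inter> Pow E) B" "I \<subseteq> B"
    using matroid_extend_maximal[OF M order_refl I matroid_indep_subset_ground[OF M I]] by blast
  moreover have "Ind \<inter> Pow E = Ind"
    using M matroid_indep_subset_ground by blast
  ultimately show thesis using that by simp
qed

lemma maximal_in_if_no_augment:
  assumes M: "matroid E Ind" and B: "maximal_in Ind B"
    and J: "J \<in> Ind" and no_aug: "\<And>x. x \<in> B - J \<Longrightarrow> insert x J \<in> Ind \<Longrightarrow> False"
  shows "maximal_in Ind J"
  using matroid_augment[OF M J B] no_aug by blast

lemma maximal_in_if_superset_of_base:
  assumes M: "matroid E Ind" and B: "maximal_in Ind B" and BW: "B \<subseteq> W"
    and J: "maximal_in (Ind \<inter> Pow W) J"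
  shows "maximal_in Ind J"
proof (rule maximal_in_if_no_augment[OF M B])
  show "J \<in> Ind" using J unfolding maximal_in_def by blast
  fix x assume x: "x \<in> B - J" "insert x J \<in> Ind"
  have "insert x J \<subseteq> W" using x(1) BW J unfolding maximal_in_def by blast
  then show False using J x unfolding maximal_in_def by blast
qed

lemma maximal_in_Un_Diff:
  assumes M: "matroid E Ind" and J: "maximal_in Ind J" and B: "maximal_in (Ind \<inter> Pow X) B"
    and P: "B \<union> (J - X) \<in> Ind"
  shows "maximal_in Ind (B \<union> (J - X))"
proof (rule maximal_in_if_no_augment[OF M J P])
  fix x assume x: "x \<in> J - (B \<union> (J - X))" "insert x (B \<union> (J - X)) \<in> Ind"
  have "insert x B \<in> Ind" by (rule matroid_indep_subset[OF M x(2)]) blast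
  moreover have "insert x B \<subseteq> X" using x(1) B unfolding maximal_in_def by blast
  ultimately have "insert x B = B" using B unfolding maximal_in_def by blast
  then show False using x(1) by blast
qed

text \<open>Pass to bases \<open>Bp \<supseteq> B\<close> and \<open>J \<supseteq> insert y I\<close> with \<open>J \<subseteq> insert y I \<union> Bp\<close>; then
  \<open>B \<union> (J - X)\<close> is a base as well, and augmenting \<open>J - {y}\<close> from it yields the required
  element of \<open>B\<close>.\<close>

lemma restriction_augment:
  assumes M: "matroid E Ind" and XE: "X \<subseteq> E" and I: "I \<in> Ind" "I \<subseteq> X"
    and B: "maximal_in (Ind \<inter> Pow X) B" and y: "y \<in> X - I" "insert y I \<in> Ind"
  shows "\<exists>x\<in>B - I. insert x I \<in> Ind"
proof (rule ccontr)
  assume no_aug: "\<not> (\<exists>x\<in>B - I. insert x I \<in> Ind)"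
  have B_ind: "B \<in> Ind" using B unfolding maximal_in_def by blast
  obtain Bp where Bp: "maximal_in Ind Bp" "B \<subseteq> Bp"
    using indep_extends_to_base[OF M B_ind] by blast
  have Bp_ind: "Bp \<in> Ind" using Bp(1) unfolding maximal_in_def by blast
  define W where "W = insert y I \<union> Bp"
  have WE: "W \<subseteq> E"
    unfolding W_def using matroid_indep_subset_ground[OF M Bp_ind] y XE I(2) by blast
  obtain J where J: "maximal_in (Ind \<inter> Pow W) J" "insert y I \<subseteq> J"
    using matroid_extend_maximal[OF M WE y(2)] W_def by blast
  have J_ind: "J \<in> Ind" "J \<subseteq> W" using J unfolding maximal_in_def by auto
  have J_base: "maximal_in Ind J"
    using maximal_in_if_superset_of_base[OF M Bp(1) _ J(1)] W_def by blast
  have "B \<union> (J - X) \<subseteq> Bp" using J_ind(2) y I(2) Bp(2) unfolding W_def by blast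
  then have P_base: "maximal_in Ind (B \<union> (J - X))"
    using maximal_in_Un_Diff[OF M J_base B] matroid_indep_subset[OF M Bp_ind] by blast
  have "\<not> maximal_in Ind (J - {y})"
    using J(2) J_ind(1) unfolding maximal_in_def by blast
  then obtain x where x: "x \<in> (B \<union> (J - X)) - (J - {y})" "insert x (J - {y}) \<in> Ind"
    using matroid_augment[OF M matroid_indep_subset[OF M J_ind(1), of "J - {y}"] P_base] by blast
  have "x \<in> B - I" using x y J(2) by blast
  moreover have "insert x I \<in> Ind"
    by (rule matroid_indep_subset[OF M x(2)]) (use J(2) y in blast)
  ultimately show False using no_aug by blast
qed

lemma insert_Diff_indep_if_maximal:
  assumes M: "matroid E Ind" and I: "I \<in> Ind" and x: "x \<in> E"
    and B: "maximal_in (Ind \<inter> Pow (insert x I)) B" and t: "t \<in> I - B"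
  shows "insert x (I - {t}) \<in> Ind"
proof -
  have XE: "insert x I \<subseteq> E" using matroid_indep_subset_ground[OF M I] x by blast
  have "I - {t} \<in> Ind" using matroid_indep_subset[OF M I, of "I - {t}"] by blast
  moreover have "insert t (I - {t}) \<in> Ind" using I t by (simp add: insert_absorb)
  ultimately obtain u where u: "u \<in> B - (I - {t})" "insert u (I - {t}) \<in> Ind"
    using restriction_augment[OF M XE _ _ B, of "I - {t}" t] t by blast
  have "B \<subseteq> insert x I" using B unfolding maximal_in_def by blast
  then have "u = x" using u t by blast
  then show ?thesis using u by simp
qed

definition fund_circuit :: "'a set set \<Rightarrow> 'a set \<Rightarrow> 'a \<Rightarrow> 'a set" where
  "fund_circuit Ind I x = insert x {z \<in> I. insert x (I - {z}) \<in> Ind}"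

lemma fund_circuit_subset: "fund_circuit Ind I x \<subseteq> insert x I"
  unfolding fund_circuit_def by blast

lemma fund_circuit_dependent:
  assumes M: "matroid E Ind" and I: "I \<in> Ind" and x: "x \<in> E" and dep: "insert x I \<notin> Ind"
  shows "fund_circuit Ind I x \<notin> Ind"
proof
  assume C: "fund_circuit Ind I x \<in> Ind"
  have XE: "insert x I \<subseteq> E" using matroid_indep_subset_ground[OF M I] x by blast
  obtain B where B: "maximal_in (Ind \<inter> Pow (insert x I)) B" "fund_circuit Ind I x \<subseteq> B"
    using matroid_extend_maximal[OF M XE C fund_circuit_subset] by blast
  have "B \<in> Ind" using B(1) unfolding maximal_in_def by auto
  moreover have "x \<in> B" using B(2) unfolding fund_circuit_def by blast
  ultimately have "\<not> I \<subseteq> B" using dep matroid_indep_subset[OF M, of B "insert x I"] by blast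
  then obtain t where t: "t \<in> I - B" by blast
  then have "t \<in> fund_circuit Ind I x"
    using insert_Diff_indep_if_maximal[OF M I x B(1)] unfolding fund_circuit_def by blast
  then show False using B(2) t by blast
qed

lemma circuit_fund_circuit:
  assumes M: "matroid E Ind" and I: "I \<in> Ind" and x: "x \<in> E" and dep: "insert x I \<notin> Ind"
  shows "circuit E Ind (fund_circuit Ind I x)"
  unfolding circuit_def
proof (intro conjI allI impI)
  show "fund_circuit Ind I x \<subseteq> E"
    using fund_circuit_subset[of Ind I x] matroid_indep_subset_ground[OF M I] x by blast
  show "fund_circuit Ind I x \<notin> Ind" using fund_circuit_dependent[OF assms] .
  fix D assume D: "D \<subset> fund_circuit Ind I x"
  show "D \<in> Ind"
  proof (cases "x \<in> D")
    case False
    then have "D \<subseteq> I" using D fund_circuit_subset[of Ind I x] by blast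
    then show ?thesis by (rule matroid_indep_subset[OF M I])
  next
    case True
    then obtain z where z: "z \<in> fund_circuit Ind I x" "z \<notin> D" "z \<noteq> x" using D by blast
    then have "insert x (I - {z}) \<in> Ind" unfolding fund_circuit_def by blast
    moreover have "D \<subseteq> insert x (I - {z})" using D z fund_circuit_subset[of Ind I x] by blast
    ultimately show ?thesis by (rule matroid_indep_subset[OF M])
  qed
qed

lemma in_span_indep_iff:
  assumes M: "matroid E Ind" and I: "I \<in> Ind"
  shows "x \<in> span E Ind I \<longleftrightarrow> x \<in> E \<and> (x \<in> I \<or> insert x I \<notin> Ind)"
proof
  assume x: "x \<in> span E Ind I"
  show "x \<in> E \<and> (x \<in> I \<or> insert x I \<notin> Ind)"
  proof (cases "x \<in> I")
    case False
    then obtain C where C: "circuit E Ind C" "x \<in> C" "C - {x} \<subseteq> I"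
      using x unfolding span_def spans_elem_def by blast
    then have "C \<subseteq> insert x I" by blast
    then have "insert x I \<notin> Ind"
      using C(1) matroid_indep_subset[OF M] unfolding circuit_def by blast
    then show ?thesis using x unfolding span_def by blast
  qed (use x in \<open>auto simp: span_def\<close>)
next
  assume x: "x \<in> E \<and> (x \<in> I \<or> insert x I \<notin> Ind)"
  show "x \<in> span E Ind I"
  proof (cases "x \<in> I")
    case False
    then have "circuit E Ind (fund_circuit Ind I x)"
      using circuit_fund_circuit[OF M I] x by blast
    moreover have "x \<in> fund_circuit Ind I x" "fund_circuit Ind I x - {x} \<subseteq> I"
      unfolding fund_circuit_def by auto
    ultimately show ?thesis using x unfolding span_def spans_elem_def by blast
  qed (use x in \<open>auto simp: span_def spans_elem_def\<close>)
qed

lemma circuit_insert_exchange: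
  assumes M: "matroid E Ind" and I: "I \<in> Ind" and C: "circuit E Ind C"
    and CI: "C \<subseteq> insert x I" and z: "z \<in> C" "z \<noteq> x"
  shows "insert x (I - {z}) \<in> Ind"
proof -
  have C_dep: "C \<notin> Ind" "C \<subseteq> E" and "C - {z} \<in> Ind"
    using C z unfolding circuit_def by auto
  moreover have x: "x \<in> E"
    using C_dep CI matroid_indep_subset[OF M I] by blast
  moreover have "insert x I \<subseteq> E" using matroid_indep_subset_ground[OF M I] x by blast
  ultimately obtain B where B: "maximal_in (Ind \<inter> Pow (insert x I)) B" "C - {z} \<subseteq> B"
    using matroid_extend_maximal[OF M, of "insert x I" "C - {z}"] CI by blast
  have "z \<notin> B"
    using B C_dep matroid_indep_subset[OF M, of B C] unfolding maximal_in_def by blast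
  then show ?thesis using insert_Diff_indep_if_maximal[OF M I x B(1)] z CI by blast
qed

definition exchangeable :: "'a set set \<Rightarrow> 'a set \<Rightarrow> 'a \<Rightarrow> 'a \<Rightarrow> bool" where
  "exchangeable Ind I x y \<longleftrightarrow> x \<notin> I \<and> insert x I \<notin> Ind \<and> y \<in> I \<and> insert x (I - {y}) \<in> Ind"

lemma exchangeable_swap:
  assumes "I \<in> Ind" "exchangeable Ind I x y"
  shows "exchangeable Ind (insert x (I - {y})) y x"
proof -
  have "insert y (insert x (I - {y})) = insert x I" "insert y (insert x (I - {y}) - {x}) = I"
    using assms unfolding exchangeable_def by auto
  then show ?thesis using assms unfolding exchangeable_def by auto
qed

lemma insert_insert_Diff_dependent:
  assumes M: "matroid E Ind" and B: "B \<in> Ind" and ax: "a \<in> E" "x \<in> E" "x \<noteq> a"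
    and dep: "insert a B \<notin> Ind" "insert x B \<notin> Ind" and b: "b \<in> B"
  shows "insert x (insert a (B - {b})) \<notin> Ind"
proof
  assume D: "insert x (insert a (B - {b})) \<in> Ind"
  define Z where "Z = insert x (insert a B)"
  have ZE: "Z \<subseteq> E" unfolding Z_def using matroid_indep_subset_ground[OF M B] ax by blast
  have B_max: "maximal_in (Ind \<inter> Pow Z) B"
    unfolding maximal_in_def
  proof (intro conjI ballI impI)
    fix B' assume B': "B' \<in> Ind \<inter> Pow Z" "B \<subseteq> B'"
    show "B' = B"
    proof (rule ccontr)
      assume "B' \<noteq> B"
      then obtain u where "u \<in> B' - B" "u = a \<or> u = x" using B' unfolding Z_def by blast
      then have "insert u B \<in> Ind" using B' matroid_indep_subset[OF M, of B' "insert u B"] by blast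
      then show False using dep \<open>u = a \<or> u = x\<close> by blast
    qed
  qed (use B Z_def in auto)
  have "insert a (B - {b}) \<in> Ind"
    using matroid_indep_subset[OF M D, of "insert a (B - {b})"] by blast
  moreover have "insert a (B - {b}) \<subseteq> Z" "x \<in> Z - insert a (B - {b})"
    using ax dep(2) B unfolding Z_def by (auto simp: insert_absorb)
  ultimately obtain u where u: "u \<in> B - insert a (B - {b})" "insert u (insert a (B - {b})) \<in> Ind"
    using restriction_augment[OF M ZE _ _ B_max, of "insert a (B - {b})" x] D by blast
  then have "u = b" by blast
  then have "insert a B \<in> Ind" using u b by (simp add: insert_absorb insert_commute)
  then show False using dep by blast
qed

lemma span_subset_span_exchange:
  assumes M: "matroid E Ind" and I: "I \<in> Ind" and ab: "exchangeable Ind I a b"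
  shows "span E Ind I \<subseteq> span E Ind (insert a (I - {b}))"
proof
  let ?I' = "insert a (I - {b})"
  have I': "?I' \<in> Ind" and a: "a \<notin> I" "insert a I \<notin> Ind" and b: "b \<in> I"
    using ab unfolding exchangeable_def by auto
  have aE: "a \<in> E" using matroid_indep_subset_ground[OF M I'] by blast
  fix x assume "x \<in> span E Ind I"
  then have x: "x \<in> E" "x \<in> I \<or> insert x I \<notin> Ind" using in_span_indep_iff[OF M I] by auto
  have "x \<in> ?I' \<or> insert x ?I' \<notin> Ind"
  proof (cases "x = b")
    case True
    then have "insert x ?I' = insert a I" using b by blast
    then show ?thesis using a by simp
  next
    case False
    then show ?thesis
      using x insert_insert_Diff_dependent[OF M I aE x(1) _ a(2) _ b] by blast
  qed
  then show "x \<in> span E Ind ?I'" using in_span_indep_iff[OF M I'] x by blast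
qed

lemma span_exchange:
  assumes M: "matroid E Ind" and I: "I \<in> Ind" and ab: "exchangeable Ind I a b"
  shows "span E Ind (insert a (I - {b})) = span E Ind I"
proof
  show "span E Ind I \<subseteq> span E Ind (insert a (I - {b}))"
    by (rule span_subset_span_exchange[OF assms])
  have I': "insert a (I - {b}) \<in> Ind" using ab unfolding exchangeable_def by blast
  have "insert b (insert a (I - {b}) - {a}) = I" using ab unfolding exchangeable_def by auto
  then show "span E Ind (insert a (I - {b})) \<subseteq> span E Ind I"
    using span_subset_span_exchange[OF M I' exchangeable_swap[OF I ab]] by simp
qed

lemma insert_Diff_set_dependent:
  assumes M: "matroid E Ind" and I: "I \<in> Ind" and x: "x \<in> E" and dep: "insert x I \<notin> Ind"
    and Z: "\<And>z. z \<in> Z \<Longrightarrow> insert x (I - {z}) \<notin> Ind"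
  shows "insert x (I - Z) \<notin> Ind"
proof
  assume "insert x (I - Z) \<in> Ind"
  moreover have "fund_circuit Ind I x \<subseteq> insert x (I - Z)"
    unfolding fund_circuit_def using Z by blast
  ultimately show False
    using fund_circuit_dependent[OF M I x dep] matroid_indep_subset[OF M] by blast
qed

lemma exchangeable_after_exchange:
  assumes M: "matroid E Ind" and I: "I \<in> Ind"
    and ab: "exchangeable Ind I a b" and xy: "exchangeable Ind I x y"
    and xa: "x \<noteq> a" and xb: "insert x (I - {b}) \<notin> Ind"
  shows "exchangeable Ind (insert a (I - {b})) x y"
proof -
  let ?I' = "insert a (I - {b})"
  have I': "?I' \<in> Ind" using ab unfolding exchangeable_def by blast
  have x: "x \<notin> I" "insert x I \<notin> Ind" "x \<in> E"
    using xy matroid_indep_subset_ground[OF M, of "insert x (I - {y})"]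
    unfolding exchangeable_def by auto
  have y: "y \<in> I" "y \<noteq> b" using xy xb unfolding exchangeable_def by auto
  have "insert x (I - {b}) \<subseteq> insert x ?I'" by blast
  then have "insert x ?I' \<notin> Ind" using xb matroid_indep_subset[OF M, of "insert x ?I'"] by blast
  moreover have "insert x (?I' - {y}) \<in> Ind"
  proof (rule circuit_insert_exchange[OF M I' circuit_fund_circuit[OF M I x(3) x(2)]])
    show "fund_circuit Ind I x \<subseteq> insert x ?I'"
      unfolding fund_circuit_def using xb by blast
    show "y \<in> fund_circuit Ind I x" "y \<noteq> x"
      using xy x(1) unfolding exchangeable_def fund_circuit_def by auto
  qed
  ultimately show ?thesis using x(1) xa y unfolding exchangeable_def by blast
qed

text \<open>Performing the exchange of the largest index of \<open>T\<close> first keeps the remaining pairs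
  exchangeable, because by the second condition the fundamental circuit of each remaining
  \<open>x s\<close> avoids the removed element.\<close>

definition exchange_chain ::
    "'a set set \<Rightarrow> 'a set \<Rightarrow> 'b::linorder set \<Rightarrow> ('b \<Rightarrow> 'a) \<Rightarrow> ('b \<Rightarrow> 'a) \<Rightarrow> bool" where
  "exchange_chain Ind I T x y \<longleftrightarrow>
     (\<forall>s\<in>T. exchangeable Ind I (x s) (y s)) \<and>
     (\<forall>s\<in>T. \<forall>t\<in>T. s < t \<longrightarrow> insert (x s) (I - {y t}) \<notin> Ind)"

lemma exchange_chain_remove_max:
  assumes M: "matroid E Ind" and I: "I \<in> Ind"
    and chain: "exchange_chain Ind I (insert m T) x y" and m: "\<And>s. s \<in> T \<Longrightarrow> s < m"
  shows "exchange_chain Ind (insert (x m) (I - {y m})) T x y"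
proof -
  have exch: "\<And>s. s \<in> insert m T \<Longrightarrow> exchangeable Ind I (x s) (y s)"
    and later: "\<And>s t. s \<in> insert m T \<Longrightarrow> t \<in> insert m T \<Longrightarrow> s < t \<Longrightarrow>
      insert (x s) (I - {y t}) \<notin> Ind"
    using chain unfolding exchange_chain_def by blast+
  have ex_m: "exchangeable Ind I (x m) (y m)" using exch by blast
  have not_m: "insert (x s) (I - {y m}) \<notin> Ind" if "s \<in> T" for s
    using later[of s m] m[OF that] that by blast
  have "exchangeable Ind (insert (x m) (I - {y m})) (x s) (y s)" if s: "s \<in> T" for s
  proof (rule exchangeable_after_exchange[OF M I ex_m _ _ not_m[OF s]])
    show "exchangeable Ind I (x s) (y s)" using exch s by blast
    show "x s \<noteq> x m" using not_m[OF s] ex_m unfolding exchangeable_def by auto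
  qed
  moreover have "insert (x s) (insert (x m) (I - {y m}) - {y t}) \<notin> Ind"
    if st: "s \<in> T" "t \<in> T" "s < t" for s t
  proof -
    have ex_s: "exchangeable Ind I (x s) (y s)" using exch st by blast
    then have "x s \<in> E" "insert (x s) I \<notin> Ind"
      using matroid_indep_subset_ground[OF M, of "insert (x s) (I - {y s})"]
      unfolding exchangeable_def by blast+
    moreover have "insert (x s) (I - {y t}) \<notin> Ind" using later[of s t] st by blast
    ultimately have "insert (x s) (I - {y m, y t}) \<notin> Ind"
      using insert_Diff_set_dependent[OF M I, of "x s" "{y m, y t}"] not_m[OF st(1)] by blast
    moreover have "insert (x s) (I - {y m, y t}) \<subseteq> insert (x s) (insert (x m) (I - {y m}) - {y t})"
      by blast
    ultimately show ?thesis using matroid_indep_subset[OF M] by blast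
  qed
  ultimately show ?thesis unfolding exchange_chain_def by blast
qed

lemma exchange_chain_indep_span:
  assumes M: "matroid E Ind" and T: "finite T"
  shows "I \<in> Ind \<Longrightarrow> exchange_chain Ind I T x y \<Longrightarrow>
    (I - y ` T) \<union> x ` T \<in> Ind \<and> span E Ind ((I - y ` T) \<union> x ` T) = span E Ind I"
  using T
proof (induction T arbitrary: I rule: finite_linorder_max_induct)
  case empty
  then show ?case by simp
next
  case (insert m T)
  let ?I' = "insert (x m) (I - {y m})"
  have exch: "\<And>s. s \<in> insert m T \<Longrightarrow> exchangeable Ind I (x s) (y s)"
    using insert.prems(2) unfolding exchange_chain_def by blast
  have I': "?I' \<in> Ind" using exch[of m] unfolding exchangeable_def by blast
  have "exchange_chain Ind ?I' T x y"
    using exchange_chain_remove_max[OF M insert.prems] insert.hyps(2) by blast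
  then have IH: "(?I' - y ` T) \<union> x ` T \<in> Ind \<and> span E Ind ((?I' - y ` T) \<union> x ` T) = span E Ind ?I'"
    using insert.IH[OF I'] by blast
  have "y ` T \<subseteq> I" "x m \<notin> I" using exch unfolding exchangeable_def by auto
  then have "(?I' - y ` T) \<union> x ` T = (I - y ` insert m T) \<union> x ` insert m T" by auto
  then show ?case
    using IH span_exchange[OF M insert.prems(1) exch[of m]] by simp
qed

lemma exchangeable_if_span_Diff:
  assumes M: "matroid E Ind" and B: "B \<in> Ind" and b: "b \<in> B"
    and a: "a \<in> span E Ind B" "a \<notin> B" "a \<notin> span E Ind (B - {b})"
  shows "exchangeable Ind B a b"
proof -
  have Bb: "B - {b} \<in> Ind" using matroid_indep_subset[OF M B, of "B - {b}"] by blast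
  have "a \<in> E" "insert a B \<notin> Ind" using a(1,2) in_span_indep_iff[OF M B] by blast+
  moreover have "insert a (B - {b}) \<in> Ind"
    using a(2,3) in_span_indep_iff[OF M Bb, of a] calculation(1) by blast
  ultimately show ?thesis using a(2) b unfolding exchangeable_def by blast
qed

lemma card_Diff_le_if_subset_span:
  assumes M: "matroid E Ind" and A: "A \<in> Ind"
  shows "B \<in> Ind \<Longrightarrow> A \<subseteq> span E Ind B \<Longrightarrow> finite (B - A) \<Longrightarrow>
    finite (A - B) \<and> card (A - B) \<le> card (B - A)"
proof (induction "card (B - A)" arbitrary: B)
  case 0
  then have "B \<subseteq> A" by simp
  have "A - B = {}"
  proof (rule ccontr)
    assume "A - B \<noteq> {}"
    then obtain a where a: "a \<in> A" "a \<notin> B" by blast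
    then have "insert a B \<notin> Ind" using "0.prems"(2) in_span_indep_iff[OF M "0.prems"(1)] by blast
    moreover have "insert a B \<in> Ind"
      using matroid_indep_subset[OF M A, of "insert a B"] a \<open>B \<subseteq> A\<close> by blast
    ultimately show False by blast
  qed
  then show ?case unfolding \<open>A - B = {}\<close> by simp
next
  case (Suc n)
  have "B - A \<noteq> {}" using Suc.hyps(2) by (metis card.empty Zero_not_Suc)
  then obtain b where b: "b \<in> B" "b \<notin> A" by blast
  have Bb: "B - {b} \<in> Ind" using matroid_indep_subset[OF M Suc.prems(1), of "B - {b}"] by blast
  have card_Bb: "card (B - {b} - A) = n" and fin_Bb: "finite (B - {b} - A)"
    using Suc.hyps(2) Suc.prems(3) b by (simp_all add: Diff_insert2[symmetric] insert_commute)
  show ?case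
  proof (cases "A \<subseteq> span E Ind (B - {b})")
    case True
    moreover have "A - (B - {b}) = A - B" using b by blast
    ultimately show ?thesis
      using Suc.hyps(1)[OF card_Bb[symmetric] Bb _ fin_Bb] Suc.hyps(2) card_Bb by simp
  next
    case False
    then obtain a where a: "a \<in> A" "a \<notin> span E Ind (B - {b})" by blast
    have aB: "a \<notin> B" using a b Suc.prems(2) unfolding span_def spans_elem_def by blast
    have ab: "exchangeable Ind B a b"
      using exchangeable_if_span_Diff[OF M Suc.prems(1) b(1) _ aB a(2)] a(1) Suc.prems(2) by blast
    let ?B' = "insert a (B - {b})"
    have "A \<subseteq> span E Ind ?B'" using Suc.prems(2) span_exchange[OF M Suc.prems(1) ab] by simp
    moreover have "?B' - A = B - {b} - A" using a(1) by blast
    moreover have "?B' \<in> Ind" using ab unfolding exchangeable_def by blast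
    ultimately have IH: "finite (A - ?B') \<and> card (A - ?B') \<le> n"
      using Suc.hyps(1)[of ?B'] card_Bb fin_Bb by simp
    have "A - B = insert a (A - ?B')" using a(1) aB b by blast
    then show ?thesis using IH Suc.hyps(2)
      by (simp add: card_insert_if)
  qed
qed

lemma subset_span_Int_if_exchange_closed:
  assumes M: "matroid E Ind" and I: "I \<in> Ind" and R: "R \<subseteq> span E Ind I"
    and closed: "\<And>y w. y \<in> R \<Longrightarrow> exchangeable Ind I y w \<Longrightarrow> w \<in> R"
  shows "R \<subseteq> span E Ind (I \<inter> R)"
proof
  fix y assume y: "y \<in> R"
  then have yE: "y \<in> E" and y_dep: "y \<notin> I \<Longrightarrow> insert y I \<notin> Ind"
    using R in_span_indep_iff[OF M I] by blast+
  show "y \<in> span E Ind (I \<inter> R)"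
  proof (cases "y \<in> I")
    case True
    then show ?thesis using y yE unfolding span_def spans_elem_def by blast
  next
    case False
    have "fund_circuit Ind I y - {y} \<subseteq> I \<inter> R"
    proof
      fix w assume "w \<in> fund_circuit Ind I y - {y}"
      then have "exchangeable Ind I y w"
        using False y_dep[OF False] unfolding fund_circuit_def exchangeable_def by blast
      then show "w \<in> I \<inter> R" using closed[OF y] unfolding exchangeable_def by blast
    qed
    moreover have "circuit E Ind (fund_circuit Ind I y)"
      using circuit_fund_circuit[OF M I yE y_dep[OF False]] .
    moreover have "y \<in> fund_circuit Ind I y" unfolding fund_circuit_def by blast
    ultimately show ?thesis using yE unfolding span_def spans_elem_def by blast
  qed
qed

lemma shortest_path:
  assumes "G\<^sup>*\<^sup>* a b" and "F b"
  obtains z n where "z 0 = a" "F (z n)" "\<And>s. s < n \<Longrightarrow> G (z s) (z (Suc s))"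
    "\<And>s t. Suc s < t \<Longrightarrow> t \<le> n \<Longrightarrow> \<not> G (z s) (z t)" "inj_on z {..n}"
proof -
  define n where "n = (LEAST n. \<exists>y. (G ^^ n) a y \<and> F y)"
  have "\<exists>y. (G ^^ n) a y \<and> F y"
    unfolding n_def by (rule LeastI_ex) (use assms rtranclp_power in metis)
  then obtain z where z: "z 0 = a" "F (z n)" "\<And>s. s < n \<Longrightarrow> G (z s) (z (Suc s))"
    unfolding relpowp_fun_conv by blast
  have minimal: "n \<le> m" if "(G ^^ m) a y" "F y" for m y
    unfolding n_def using that by (blast intro: Least_le)
  have segment: "(G ^^ (t - s)) (z s) (z t)" if "s \<le> t" "t \<le> n" for s t
    unfolding relpowp_fun_conv
    by (rule exI[of _ "\<lambda>i. z (s + i)"]) (use that z(3) in auto)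
  have no_shorter: "t - s \<le> k" if st: "s \<le> t" "t \<le> n" and k: "(G ^^ k) (z s) (z t)" for s t k
  proof -
    have "(G ^^ (s + k + (n - t))) a (z n)"
      unfolding relpowp_add using segment[of 0 s] segment[of t n] z(1) st k by auto
    then have "n \<le> s + k + (n - t)" using minimal z(2) by blast
    then show ?thesis using st by linarith
  qed
  show thesis
  proof (rule that[OF z])
    show "\<not> G (z s) (z t)" if "Suc s < t" "t \<le> n" for s t
      using no_shorter[of s t 1] that unfolding relpowp_1 by fastforce
    show "inj_on z {..n}"
    proof (rule linorder_inj_onI)
      fix s t assume "s < t" "s \<in> {..n}" "t \<in> {..n}"
      then show "z s \<noteq> z t" using no_shorter[of s t 0] by auto
    qed auto
  qed
qed

locale disjoint_indep_family =
  fixes E :: "'a set" and K :: "'k set"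
    and M :: "'k \<Rightarrow> 'a set set" and I :: "'k \<Rightarrow> 'a set" and e :: 'a
  assumes matroids: "\<forall>i\<in>K. matroid E (M i)"
    and indep: "\<forall>i\<in>K. I i \<in> M i"
    and disj: "\<forall>i\<in>K. \<forall>j\<in>K. i \<noteq> j \<longrightarrow> I i \<inter> I j = {}"
    and e: "e \<in> E - (\<Union>i\<in>K. I i)"
begin

definition augmenting_family :: "('k \<Rightarrow> 'a set) \<Rightarrow> 'k \<Rightarrow> bool" where
  "augmenting_family J k \<longleftrightarrow>
     (\<forall>i\<in>K. J i \<in> M i) \<and>
     (\<forall>i\<in>K. \<forall>j\<in>K. i \<noteq> j \<longrightarrow> J i \<inter> J j = {}) \<and>
     (\<Union>i\<in>K. J i) = (\<Union>i\<in>K. I i) \<union> {e} \<and>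
     (finite {i\<in>K. I i \<noteq> J i} \<and> (\<forall>i\<in>K. finite ((I i - J i) \<union> (J i - I i)))) \<and>
     (\<forall>i\<in>K. i \<noteq> k \<longrightarrow> span E (M i) (J i) = span E (M i) (I i)) \<and>
     (\<exists>f\<in>J k. span E (M k) (J k - {f}) = span E (M k) (I k))"

definition blocking_set :: "'a set \<Rightarrow> bool" where
  "blocking_set X \<longleftrightarrow> X \<subseteq> (\<Union>i\<in>K. I i) \<and> (\<forall>i\<in>K. X \<union> {e} \<subseteq> span E (M i) (I i \<inter> X))"

lemma e_notin_I: "i \<in> K \<Longrightarrow> e \<notin> I i"
  using e by blast

lemma blocking_set_card_le:
  assumes X: "blocking_set X" and i: "i \<in> K" and J: "J \<in> M i" and fin: "finite (I i - J)"
  shows "finite (J \<inter> insert e X - I i \<inter> X) \<and>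
    card (J \<inter> insert e X - I i \<inter> X) \<le> card (I i \<inter> X - J \<inter> insert e X)"
proof -
  have Mi: "matroid E (M i)" using matroids i by blast
  have "J \<inter> insert e X \<in> M i" "I i \<inter> X \<in> M i"
    using matroid_indep_subset[OF Mi] J indep i by blast+
  moreover have "J \<inter> insert e X \<subseteq> span E (M i) (I i \<inter> X)"
    using X i unfolding blocking_set_def by blast
  moreover have "finite (I i \<inter> X - J \<inter> insert e X)"
    by (rule finite_subset[OF _ fin]) blast
  ultimately show ?thesis by (rule card_Diff_le_if_subset_span[OF Mi])
qed

lemma not_blocking_set_if_cover:
  assumes J: "\<forall>i\<in>K. J i \<in> M i" and cover: "insert e (\<Union>i\<in>K. I i) \<subseteq> (\<Union>i\<in>K. J i)"
    and fin: "finite {i\<in>K. I i \<noteq> J i}" "\<forall>i\<in>K. finite (I i - J i)"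
  shows "\<not> blocking_set X"
proof
  assume X: "blocking_set X"
  define gained where "gained i = J i \<inter> insert e X - I i \<inter> X" for i
  define lost where "lost i = I i \<inter> X - J i \<inter> insert e X" for i
  define S where "S = {i\<in>K. I i \<noteq> J i}"
  have fin_lost: "finite (lost i)" if "i \<in> K" for i
    using fin(2) that finite_subset[of "lost i" "I i - J i"] unfolding lost_def by blast
  have card_gained: "finite (gained i) \<and> card (gained i) \<le> card (lost i)" if "i \<in> K" for i
    using blocking_set_card_le[OF X that, of "J i"] J fin(2) that unfolding gained_def lost_def
    by simp
  have "insert e (\<Union>i\<in>S. lost i) \<subseteq> (\<Union>i\<in>S. gained i)"
  proof (intro insert_subsetI UN_least subsetI)
    obtain j where "j \<in> K" "e \<in> J j" using cover by blast
    then show "e \<in> (\<Union>i\<in>S. gained i)" using e_notin_I unfolding S_def gained_def by blast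
  next
    fix i u assume i: "i \<in> S" and u: "u \<in> lost i"
    then have iK: "i \<in> K" and u_I: "u \<in> I i" "u \<in> X" "u \<notin> J i"
      unfolding S_def lost_def by auto
    then obtain j where j: "j \<in> K" "u \<in> J j" using cover by blast
    moreover have "j \<noteq> i" using j u_I by blast
    ultimately have "u \<notin> I j" using disj iK u_I by blast
    then show "u \<in> (\<Union>i\<in>S. gained i)"
      using j u_I unfolding S_def gained_def by blast
  qed
  moreover have "e \<notin> (\<Union>i\<in>S. lost i)" using e_notin_I unfolding S_def lost_def by blast
  moreover have fin_S: "finite S" using fin(1) unfolding S_def .
  moreover have "finite (\<Union>i\<in>S. lost i)" "finite (\<Union>i\<in>S. gained i)"
    using fin_S fin_lost card_gained unfolding S_def by auto
  ultimately have "card (\<Union>i\<in>S. lost i) < card (\<Union>i\<in>S. gained i)"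
    using card_mono[of "\<Union>i\<in>S. gained i" "insert e (\<Union>i\<in>S. lost i)"] by simp
  also have "\<dots> \<le> (\<Sum>i\<in>S. card (gained i))" using card_UN_le[OF fin_S] .
  also have "\<dots> \<le> (\<Sum>i\<in>S. card (lost i))"
    by (rule sum_mono) (use card_gained in \<open>auto simp: S_def\<close>)
  also have "\<dots> = card (\<Union>i\<in>S. lost i)"
  proof (rule card_UN_disjoint[symmetric, OF fin_S])
    show "\<forall>i\<in>S. finite (lost i)" using fin_lost unfolding S_def by blast
    show "\<forall>i\<in>S. \<forall>j\<in>S. i \<noteq> j \<longrightarrow> lost i \<inter> lost j = {}"
      using disj unfolding S_def lost_def by blast
  qed
  finally show False by simp
qed

definition exchange_edge :: "'a \<Rightarrow> 'a \<Rightarrow> bool" where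
  "exchange_edge y w \<longleftrightarrow> (\<exists>i\<in>K. exchangeable (M i) (I i) y w)"

definition insertable :: "'a \<Rightarrow> bool" where
  "insertable y \<longleftrightarrow> (\<exists>k\<in>K. y \<notin> I k \<and> insert y (I k) \<in> M k)"

lemma exchange_edge_target: "exchange_edge y w \<Longrightarrow> \<exists>i\<in>K. w \<in> I i"
  unfolding exchange_edge_def exchangeable_def by blast

lemma reachable_in_ground:
  assumes "exchange_edge\<^sup>*\<^sup>* e y"
  shows "y \<in> E" "y \<noteq> e \<Longrightarrow> y \<in> (\<Union>i\<in>K. I i)"
proof -
  have "y = e \<or> (\<exists>i\<in>K. y \<in> I i)"
    using assms by (cases rule: rtranclp.cases) (auto dest: exchange_edge_target)
  moreover have "I i \<subseteq> E" if "i \<in> K" for i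
    using matroid_indep_subset_ground matroids indep that by blast
  ultimately show "y \<in> E" "y \<noteq> e \<Longrightarrow> y \<in> (\<Union>i\<in>K. I i)"
    using e by blast+
qed

lemma blocking_set_if_no_insertable_reachable:
  assumes none: "\<And>y. exchange_edge\<^sup>*\<^sup>* e y \<Longrightarrow> \<not> insertable y"
  shows "blocking_set ({y. exchange_edge\<^sup>*\<^sup>* e y} - {e})"
proof -
  define R where "R = {y. exchange_edge\<^sup>*\<^sup>* e y}"
  have "R \<subseteq> span E (M i) (I i \<inter> R)" if i: "i \<in> K" for i
  proof (rule subset_span_Int_if_exchange_closed)
    show Mi: "matroid E (M i)" and Ii: "I i \<in> M i" using matroids indep i by blast+
    show "R \<subseteq> span E (M i) (I i)"
    proof
      fix y assume "y \<in> R"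
      then have "y \<in> E" "\<not> insertable y"
        using none reachable_in_ground(1) unfolding R_def by blast+
      then show "y \<in> span E (M i) (I i)"
        using i in_span_indep_iff[OF Mi Ii] unfolding insertable_def by blast
    qed
    show "w \<in> R" if "y \<in> R" "exchangeable (M i) (I i) y w" for y w
      using that i rtranclp.rtrancl_into_rtrancl[of exchange_edge e y w]
      unfolding R_def exchange_edge_def by blast
  qed
  moreover have "I i \<inter> (R - {e}) = I i \<inter> R" "R - {e} \<union> {e} = R" if "i \<in> K" for i
    using e_notin_I[OF that] unfolding R_def by auto
  moreover have "R - {e} \<subseteq> (\<Union>i\<in>K. I i)"
    using reachable_in_ground(2) unfolding R_def by blast
  ultimately show ?thesis unfolding blocking_set_def R_def by simp
qed

end

locale shortest_exchange_path = disjoint_indep_family E K M I e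
    for E :: "'a set" and K :: "'k set" and M I e +
  fixes z :: "nat \<Rightarrow> 'a" and n :: nat and k :: 'k
  assumes start: "z 0 = e"
    and step: "\<And>s. s < n \<Longrightarrow> exchange_edge (z s) (z (Suc s))"
    and no_shortcut: "\<And>s t. Suc s < t \<Longrightarrow> t \<le> n \<Longrightarrow> \<not> exchange_edge (z s) (z t)"
    and inj: "inj_on z {..n}"
    and k: "k \<in> K" and last_insertable: "z n \<notin> I k" "insert (z n) (I k) \<in> M k"
begin

definition steps_into :: "'k \<Rightarrow> nat set" where
  "steps_into i = {s. s < n \<and> z (Suc s) \<in> I i}"

definition visits :: "'k \<Rightarrow> nat set" where
  "visits i = steps_into i \<union> (if i = k then {n} else {})"

definition exchanged :: "'k \<Rightarrow> 'a set" where
  "exchanged i = (I i - (z \<circ> Suc) ` steps_into i) \<union> z ` steps_into i"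

definition augmented :: "'k \<Rightarrow> 'a set" where
  "augmented i = (I i - z ` {..n}) \<union> z ` visits i"

lemma step_exchangeable:
  assumes s: "s < n" and i: "i \<in> K" and si: "z (Suc s) \<in> I i"
  shows "exchangeable (M i) (I i) (z s) (z (Suc s))"
proof -
  obtain j where j: "j \<in> K" "exchangeable (M j) (I j) (z s) (z (Suc s))"
    using step[OF s] unfolding exchange_edge_def by blast
  then have "i = j" using disj i si unfolding exchangeable_def by blast
  then show ?thesis using j by simp
qed

lemma exchange_chain_steps_into:
  assumes i: "i \<in> K"
  shows "exchange_chain (M i) (I i) (steps_into i) z (z \<circ> Suc)"
  unfolding exchange_chain_def
proof (intro conjI ballI impI)
  fix s assume "s \<in> steps_into i"
  then show "exchangeable (M i) (I i) (z s) ((z \<circ> Suc) s)"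
    using step_exchangeable i unfolding steps_into_def by simp
next
  fix s t assume s: "s \<in> steps_into i" and t: "t \<in> steps_into i" and st: "s < t"
  show "insert (z s) (I i - {(z \<circ> Suc) t}) \<notin> M i"
  proof
    assume "insert (z s) (I i - {(z \<circ> Suc) t}) \<in> M i"
    then have "exchangeable (M i) (I i) (z s) (z (Suc t))"
      using step_exchangeable[of s i] s t i unfolding steps_into_def exchangeable_def by auto
    then have "exchange_edge (z s) (z (Suc t))" using i unfolding exchange_edge_def by blast
    then show False using no_shortcut[of s "Suc t"] st t unfolding steps_into_def by simp
  qed
qed

lemma exchanged_indep_span:
  assumes i: "i \<in> K"
  shows "exchanged i \<in> M i \<and> span E (M i) (exchanged i) = span E (M i) (I i)"
proof -
  have "finite (steps_into i)" unfolding steps_into_def by simp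
  then show ?thesis
    using exchange_chain_indep_span[of E "M i"] matroids indep i exchange_chain_steps_into[OF i]
    unfolding exchanged_def by blast
qed

lemma I_Int_path_image:
  assumes i: "i \<in> K"
  shows "I i \<inter> z ` {..n} = (z \<circ> Suc) ` steps_into i"
proof
  show "I i \<inter> z ` {..n} \<subseteq> (z \<circ> Suc) ` steps_into i"
  proof
    fix u assume "u \<in> I i \<inter> z ` {..n}"
    then obtain t where t: "t \<le> n" "u = z t" "u \<in> I i" by blast
    then obtain s where "t = Suc s" using start e_notin_I[OF i] by (cases t) auto
    then show "u \<in> (z \<circ> Suc) ` steps_into i" using t unfolding steps_into_def by auto
  qed
  show "(z \<circ> Suc) ` steps_into i \<subseteq> I i \<inter> z ` {..n}"
    unfolding steps_into_def by auto
qed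

lemma exchanged_eq: "i \<in> K \<Longrightarrow> exchanged i = (I i - z ` {..n}) \<union> z ` steps_into i"
  unfolding exchanged_def using I_Int_path_image[of i] by blast

lemma augmented_eq:
  "i \<in> K \<Longrightarrow> augmented i = (if i = k then insert (z n) (exchanged i) else exchanged i)"
  unfolding augmented_def visits_def by (auto simp: exchanged_eq)

lemma last_insert_exchanged: "z n \<notin> exchanged k" "insert (z n) (exchanged k) \<in> M k"
proof -
  have Mk: "matroid E (M k)" and Ik: "I k \<in> M k" using matroids indep k by blast+
  have "z n \<in> E" using matroid_indep_subset_ground[OF Mk last_insertable(2)] by blast
  moreover have "z n \<notin> span E (M k) (I k)"
    using in_span_indep_iff[OF Mk Ik] last_insertable by blast
  ultimately show "z n \<notin> exchanged k" "insert (z n) (exchanged k) \<in> M k"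
    using exchanged_indep_span[OF k] in_span_indep_iff[OF Mk, of "exchanged k" "z n"] by auto
qed

lemma augmented_indep: "i \<in> K \<Longrightarrow> augmented i \<in> M i"
  using augmented_eq exchanged_indep_span last_insert_exchanged by simp

lemma visits_subset: "visits i \<subseteq> {..n}"
  unfolding visits_def steps_into_def by auto

lemma visits_disjoint:
  assumes "i \<in> K" "j \<in> K" "i \<noteq> j"
  shows "visits i \<inter> visits j = {}"
  using assms disj unfolding visits_def steps_into_def by auto

lemma Union_visits: "(\<Union>i\<in>K. visits i) = {..n}"
proof
  show "{..n} \<subseteq> (\<Union>i\<in>K. visits i)"
  proof
    fix s assume s: "s \<in> {..n}"
    show "s \<in> (\<Union>i\<in>K. visits i)"
    proof (cases "s = n")
      case True
      then show ?thesis using k unfolding visits_def by auto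
    next
      case False
      then obtain i where "i \<in> K" "z (Suc s) \<in> I i"
        using s exchange_edge_target[OF step[of s]] by auto
      then show ?thesis using s False unfolding visits_def steps_into_def by auto
    qed
  qed
qed (use visits_subset in blast)

lemma augmented_disjoint:
  assumes ij: "i \<in> K" "j \<in> K" "i \<noteq> j"
  shows "augmented i \<inter> augmented j = {}"
proof -
  have "z ` visits i \<inter> z ` visits j = {}"
    using inj_on_image_Int[OF inj visits_subset[of i] visits_subset[of j]] visits_disjoint[OF ij] by simp
  moreover have "I i \<inter> I j = {}" using disj ij by blast
  moreover have "z ` visits i \<subseteq> z ` {..n}" "z ` visits j \<subseteq> z ` {..n}"
    using visits_subset by (blast, blast)
  ultimately show ?thesis unfolding augmented_def by blast
qed

lemma path_subset: "z ` {..n} \<subseteq> insert e (\<Union>i\<in>K. I i)"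
proof
  fix u assume "u \<in> z ` {..n}"
  then obtain t where t: "t \<le> n" "u = z t" by blast
  show "u \<in> insert e (\<Union>i\<in>K. I i)"
  proof (cases t)
    case (Suc s)
    then show ?thesis using exchange_edge_target[OF step[of s]] t by auto
  qed (use t start in simp)
qed

lemma Union_augmented: "(\<Union>i\<in>K. augmented i) = (\<Union>i\<in>K. I i) \<union> {e}"
proof -
  have "(\<Union>i\<in>K. augmented i) = (\<Union>i\<in>K. I i - z ` {..n}) \<union> (\<Union>i\<in>K. z ` visits i)"
    unfolding augmented_def by (rule UN_Un_distrib)
  also have "(\<Union>i\<in>K. z ` visits i) = z ` (\<Union>i\<in>K. visits i)" by (rule image_UN[symmetric])
  also have "(\<Union>i\<in>K. I i - z ` {..n}) = (\<Union>i\<in>K. I i) - z ` {..n}" by blast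
  finally have "(\<Union>i\<in>K. augmented i) = ((\<Union>i\<in>K. I i) - z ` {..n}) \<union> z ` {..n}"
    unfolding Union_visits .
  moreover have "e \<in> z ` {..n}" using start by (metis atMost_iff image_eqI le0)
  ultimately show ?thesis using path_subset by blast
qed

lemma augmented_changes_finite:
  "finite {i\<in>K. I i \<noteq> augmented i}" "finite ((I i - augmented i) \<union> (augmented i - I i))"
proof -
  have "{i\<in>K. I i \<noteq> augmented i} \<subseteq> insert k (\<Union>s<n. {i\<in>K. z (Suc s) \<in> I i})"
  proof
    fix i assume i: "i \<in> {i\<in>K. I i \<noteq> augmented i}"
    show "i \<in> insert k (\<Union>s<n. {i\<in>K. z (Suc s) \<in> I i})"
    proof (rule ccontr)
      assume "i \<notin> insert k (\<Union>s<n. {i\<in>K. z (Suc s) \<in> I i})"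
      then have "i \<noteq> k" "steps_into i = {}" using i unfolding steps_into_def by auto
      moreover from this have "I i \<inter> z ` {..n} = {}" using I_Int_path_image[of i] i by simp
      ultimately have "augmented i = I i" unfolding augmented_def visits_def by auto
      then show False using i by simp
    qed
  qed
  moreover have "finite {i\<in>K. u \<in> I i}" for u
  proof (cases "\<exists>i\<in>K. u \<in> I i")
    case True
    then obtain i where "i \<in> K" "u \<in> I i" by blast
    then have "{i\<in>K. u \<in> I i} \<subseteq> {i}" using disj by blast
    then show ?thesis using finite_subset by blast
  next
    case False
    then have "{i\<in>K. u \<in> I i} = {}" by blast
    then show ?thesis by (metis finite.emptyI)
  qed
  ultimately show "finite {i\<in>K. I i \<noteq> augmented i}" by (simp add: finite_subset)
  have "(I i - augmented i) \<union> (augmented i - I i) \<subseteq> z ` {..n}"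
    unfolding augmented_def using visits_subset by blast
  then show "finite ((I i - augmented i) \<union> (augmented i - I i))"
    by (rule finite_subset) simp
qed

lemma augmenting_family_augmented: "augmenting_family augmented k"
  unfolding augmenting_family_def
proof (intro conjI ballI impI)
  show "span E (M i) (augmented i) = span E (M i) (I i)" if "i \<in> K" "i \<noteq> k" for i
    using that augmented_eq exchanged_indep_span by simp
  show "\<exists>f\<in>augmented k. span E (M k) (augmented k - {f}) = span E (M k) (I k)"
    using augmented_eq[OF k] exchanged_indep_span[OF k] last_insert_exchanged(1) by auto
qed (use k augmented_indep augmented_disjoint Union_augmented augmented_changes_finite in auto)

end

lemma (in disjoint_indep_family) augmenting_family_if_no_blocking_set:
  assumes "\<nexists>X. blocking_set X"
  obtains J k where "k \<in> K" "augmenting_family J k"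
proof -
  obtain y where y: "exchange_edge\<^sup>*\<^sup>* e y" "insertable y"
    using assms blocking_set_if_no_insertable_reachable by blast
  then obtain z n where path: "z 0 = e" "insertable (z n)"
    "\<And>s. s < n \<Longrightarrow> exchange_edge (z s) (z (Suc s))"
    "\<And>s t. Suc s < t \<Longrightarrow> t \<le> n \<Longrightarrow> \<not> exchange_edge (z s) (z t)" "inj_on z {..n}"
    using shortest_path[of exchange_edge e y insertable] y by blast
  then obtain k where "k \<in> K" "z n \<notin> I k" "insert (z n) (I k) \<in> M k"
    unfolding insertable_def by blast
  then interpret shortest_exchange_path E K M I e z n k
    using path by unfold_locales
  show thesis using that k augmenting_family_augmented by blast
qed

lemma (in disjoint_indep_family) augmenting_family_iff_no_blocking_set:
  "(\<exists>J. \<exists>k\<in>K. augmenting_family J k) \<longleftrightarrow> (\<nexists>X. blocking_set X)"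
proof
  assume "\<exists>J. \<exists>k\<in>K. augmenting_family J k"
  then obtain J k where J: "augmenting_family J k" by blast
  then have "\<forall>i\<in>K. J i \<in> M i" "insert e (\<Union>i\<in>K. I i) \<subseteq> (\<Union>i\<in>K. J i)"
    "finite {i\<in>K. I i \<noteq> J i}" "\<forall>i\<in>K. finite (I i - J i)"
    unfolding augmenting_family_def by auto
  then show "\<nexists>X. blocking_set X" using not_blocking_set_if_cover by blast
qed (use augmenting_family_if_no_blocking_set in blast)

theorem lemma3p1:
  fixes E :: "'a set" and K :: "'k set"
    and M :: "'k \<Rightarrow> 'a set set" and I :: "'k \<Rightarrow> 'a set" and e :: 'a
  assumes matroids: "\<forall>i\<in>K. matroid E (M i)"
    and indep: "\<forall>i\<in>K. I i \<in> M i"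
    and disj: "\<forall>i\<in>K. \<forall>j\<in>K. i \<noteq> j \<longrightarrow> I i \<inter> I j = {}"
    and e: "e \<in> E - (\<Union>i\<in>K. I i)"
  shows "(\<exists>J :: 'k \<Rightarrow> 'a set. \<exists>k\<in>K.
            (\<forall>i\<in>K. J i \<in> M i) \<and>
            (\<forall>i\<in>K. \<forall>j\<in>K. i \<noteq> j \<longrightarrow> J i \<inter> J j = {}) \<and>
            (\<Union>i\<in>K. J i) = (\<Union>i\<in>K. I i) \<union> {e} \<and>
            (finite {i\<in>K. I i \<noteq> J i} \<and> (\<forall>i\<in>K. finite ((I i - J i) \<union> (J i - I i)))) \<and>
            (\<forall>i\<in>K. i \<noteq> k \<longrightarrow> span E (M i) (J i) = span E (M i) (I i)) \<and>
            (\<exists>f\<in>J k. span E (M k) (J k - {f}) = span E (M k) (I k)))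
       \<noteq>
         (\<exists>X. X \<subseteq> (\<Union>i\<in>K. I i) \<and>
            (\<forall>i\<in>K. X \<union> {e} \<subseteq> span E (M i) (I i \<inter> X)))"
proof -
  interpret disjoint_indep_family E K M I e
    using assms by unfold_locales
  show ?thesis
    unfolding not_iff
    using augmenting_family_iff_no_blocking_set
    unfolding augmenting_family_def blocking_set_def .
qed

end
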